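(* For any integers $n \geq 3$ and $m \geq 1$, $\chi_\rho(FSSD_m(K_n)) = n+1$.
   Context: All graphs are finite and simple. For a positive integer $i$, an $i$-packing in a graph $G$ is a set of vertices any two distinct members of which are at distance greater than $i$. The packing chromatic number $\chi_\rho(G)$ is the smallest integer $k$ such that $V(G)$ can be partitioned into sets $V_1,\dots,V_k$ with each $V_i$ an $i$-packing. For a positive integer $m$, $FSSD_m(G)$ is obtained from $G$ by replacing each edge $uv$ of $G$ by a copy of $K_{2,m}$: the edge $uv$ is deleted and $m$ new vertices are added, each adjacent to exactly $u$ and $v$. $K_n$ is the complete graph on $n$ vertices. *)

theory Defs
  imports Main "HOL-Library.Extended_Nat"
begin

text \<open>A finite simple graph is given by a vertex set V and a symmetric,
irreflexive adjacency relation E (only its restriction to V matters).\<close>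

fun reach_within :: "'a set \<Rightarrow> ('a \<Rightarrow> 'a \<Rightarrow> bool) \<Rightarrow> nat \<Rightarrow> 'a \<Rightarrow> 'a \<Rightarrow> bool" where
  "reach_within V E 0 u v = (u = v \<and> u \<in> V)"
| "reach_within V E (Suc k) u v =
     (reach_within V E k u v \<or> (\<exists>w\<in>V. reach_within V E k u w \<and> E w v \<and> v \<in> V))"

definition gdist :: "'a set \<Rightarrow> ('a \<Rightarrow> 'a \<Rightarrow> bool) \<Rightarrow> 'a \<Rightarrow> 'a \<Rightarrow> enat" where
  "gdist V E u v = (if \<exists>k. reach_within V E k u v
                    then enat (LEAST k. reach_within V E k u v) else \<infinity>)"

definition is_packing :: "'a set \<Rightarrow> ('a \<Rightarrow> 'a \<Rightarrow> bool) \<Rightarrow> nat \<Rightarrow> 'a set \<Rightarrow> bool" where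
  "is_packing V E i S = (S \<subseteq> V \<and>
     (\<forall>u\<in>S. \<forall>v\<in>S. u \<noteq> v \<longrightarrow> gdist V E u v > enat i))"

definition packing_chromatic :: "'a set \<Rightarrow> ('a \<Rightarrow> 'a \<Rightarrow> bool) \<Rightarrow> nat" where
  "packing_chromatic V E = (LEAST k. \<exists>c. (\<forall>v\<in>V. c v \<in> {1..k}) \<and>
       (\<forall>i\<in>{1..k}. is_packing V E i {v\<in>V. c v = i}))"

definition K_verts :: "nat \<Rightarrow> nat set" where
  "K_verts n = {..<n}"

definition K_adj :: "nat \<Rightarrow> nat \<Rightarrow> nat \<Rightarrow> bool" where
  "K_adj n u v = (u < n \<and> v < n \<and> u \<noteq> v)"

text \<open>FSSD_m(G): every edge uv (an unordered pair {u,v}) is replaced by m new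
 vertices Inr ({u,v}, t), t < m, each adjacent exactly to u and v; the original
 vertices are Inl u and the original edges are deleted.\<close>
definition fssd_verts :: "'a set \<Rightarrow> ('a \<Rightarrow> 'a \<Rightarrow> bool) \<Rightarrow> nat \<Rightarrow> ('a + ('a set \<times> nat)) set" where
  "fssd_verts V E m = Inl ` V \<union>
     {Inr (e, t) | e t. t < m \<and> (\<exists>u\<in>V. \<exists>v\<in>V. E u v \<and> e = {u, v})}"

definition fssd_adj :: "'a set \<Rightarrow> ('a \<Rightarrow> 'a \<Rightarrow> bool) \<Rightarrow> nat \<Rightarrow>
     ('a + ('a set \<times> nat)) \<Rightarrow> ('a + ('a set \<times> nat)) \<Rightarrow> bool" where
  "fssd_adj V E m x y = (x \<in> fssd_verts V E m \<and> y \<in> fssd_verts V E m \<and>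
     (case (x, y) of
        (Inl u, Inr (e, t)) \<Rightarrow> u \<in> e
      | (Inr (e, t), Inl u) \<Rightarrow> u \<in> e
      | _ \<Rightarrow> False))"

end

theory Submission
  imports Defs
begin

(*
  Colouring the original vertices with the distinct colours 2, ..., n + 1 and every
  subdivision vertex with colour 1 is a packing colouring, since no two subdivision
  vertices are adjacent.

  Conversely, FSSD_m(K_n) has diameter 4, so each colour j >= 4 occurs at most once,
  while a set of vertices pairwise at distance at most 2 (the original vertices, or the
  subdivision vertices on edges with a common endpoint) contains at most one vertex of
  each colour. Neighbours of a vertex of colour 1 avoid colour 1. Counting the colours
  2, 3 and >= 4 on a large set of vertices avoiding colour 1 shows that a packing
  colouring with k colours has k >= n + 1. The set used is: all original vertices, if
  none has colour 1; otherwise the subdivision vertices around an original vertex of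
  colour 1 together with the (at least two) original vertices not of colour 1, all
  pairwise at distance at most 3; and, if at most one original vertex avoids colour 1,
  the subdivision vertices of all edges (n = 3, 4) or around two original vertices
  (n >= 5).
*)

lemma reach_within_mono:
  "reach_within V E k x y \<Longrightarrow> k \<le> l \<Longrightarrow> reach_within V E l x y"
  by (induction l) (auto simp: le_Suc_eq)

lemma reach_within_add:
  "reach_within V E k x y \<Longrightarrow> reach_within V E l y z \<Longrightarrow> reach_within V E (k + l) x z"
  by (induction l arbitrary: z) auto

lemma reach_within_trans:
  "reach_within V E k x y \<Longrightarrow> reach_within V E l y z \<Longrightarrow> k + l \<le> j \<Longrightarrow> reach_within V E j x z"
  using reach_within_add reach_within_mono by metis

lemma reach_within_refl: "x \<in> V \<Longrightarrow> reach_within V E k x x"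
  by (induction k) auto

lemma reach_within_1_iff: "reach_within V E 1 x y \<longleftrightarrow> x \<in> V \<and> y \<in> V \<and> (x = y \<or> E x y)"
  by auto

lemma reach_within_sym:
  assumes sym: "\<And>u v. E u v \<Longrightarrow> E v u" and "reach_within V E k x y"
  shows "reach_within V E k y x"
  using assms(2)
proof (induction k arbitrary: y)
  case 0
  then show ?case by auto
next
  case (Suc k)
  show ?case
  proof (cases "reach_within V E k x y")
    case True
    then show ?thesis using Suc.IH by simp
  next
    case False
    then obtain w where w: "w \<in> V" "reach_within V E k x w" "E w y" "y \<in> V"
      using Suc.prems by auto
    have "reach_within V E 1 y w" using w sym by (simp add: reach_within_1_iff)
    from this Suc.IH[OF w(2)] show ?thesis by (rule reach_within_trans) simp
  qed
qed

lemma less_gdist_iff: "enat i < gdist V E x y \<longleftrightarrow> \<not> reach_within V E i x y"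
proof (cases "\<exists>k. reach_within V E k x y")
  case True
  let ?d = "LEAST k. reach_within V E k x y"
  have "reach_within V E ?d x y" using True by (rule LeastI_ex)
  then have "reach_within V E i x y \<longleftrightarrow> ?d \<le> i"
    by (auto intro: Least_le reach_within_mono)
  then show ?thesis using True by (auto simp: gdist_def)
qed (auto simp: gdist_def)

declare reach_within.simps [simp del]

definition packing_colouring :: "'a set \<Rightarrow> ('a \<Rightarrow> 'a \<Rightarrow> bool) \<Rightarrow> nat \<Rightarrow> ('a \<Rightarrow> nat) \<Rightarrow> bool" where
  "packing_colouring V E k c \<longleftrightarrow>
     (\<forall>v\<in>V. c v \<in> {1..k}) \<and> (\<forall>i\<in>{1..k}. is_packing V E i {v\<in>V. c v = i})"

lemma packing_colouring_iff:
  "packing_colouring V E k c \<longleftrightarrow> (\<forall>v\<in>V. c v \<in> {1..k}) \<and>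
     (\<forall>x\<in>V. \<forall>y\<in>V. c x = c y \<and> reach_within V E (c x) x y \<longrightarrow> x = y)"
  unfolding packing_colouring_def is_packing_def less_gdist_iff by fastforce

lemma packing_chromatic_eqI:
  assumes "packing_colouring V E k c" and "\<And>k' c'. packing_colouring V E k' c' \<Longrightarrow> k \<le> k'"
  shows "packing_chromatic V E = k"
  unfolding packing_chromatic_def packing_colouring_def[symmetric]
  using assms by (blast intro: Least_equality)

lemma card_colour_class_le_1:
  assumes "packing_colouring V E k c" "S \<subseteq> V" "pairwise (reach_within V E i) S" "i \<le> j"
  shows "card {x\<in>S. c x = j} \<le> 1"
proof (cases "finite {x\<in>S. c x = j}")
  case True
  have "x = y" if "x \<in> S" "y \<in> S" "c x = j" "c y = j" for x y
  proof (rule ccontr)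
    assume "x \<noteq> y"
    then have "reach_within V E i x y" using pairwiseD(1)[OF assms(3) that(1,2)] by simp
    then have "reach_within V E (c x) x y" using assms(4) that(3) by (simp add: reach_within_mono)
    then show False using assms(1,2) that \<open>x \<noteq> y\<close> unfolding packing_colouring_iff by (metis subsetD)
  qed
  then show ?thesis using True by (auto simp: card_le_Suc0_iff_eq)
qed simp

lemma card_colour_class_Un_le_2:
  assumes "packing_colouring V E k c" "A \<subseteq> V" "B \<subseteq> V"
    "pairwise (reach_within V E i) A" "pairwise (reach_within V E i) B" "i \<le> j"
  shows "card {x\<in>A \<union> B. c x = j} \<le> 2"
proof -
  have "{x\<in>A \<union> B. c x = j} = {x\<in>A. c x = j} \<union> {x\<in>B. c x = j}" by auto
  then have "card {x\<in>A \<union> B. c x = j} \<le> card {x\<in>A. c x = j} + card {x\<in>B. c x = j}"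
    by (simp add: card_Un_le)
  then show ?thesis
    using card_colour_class_le_1[OF assms(1,2,4,6)] card_colour_class_le_1[OF assms(1,3,5,6)]
    by linarith
qed

lemma card_le_colours_2_3_if_diameter_le_4:
  assumes col: "packing_colouring V E k c" and diam: "\<forall>x\<in>V. \<forall>y\<in>V. reach_within V E 4 x y"
    and "S \<subseteq> V" "1 \<notin> c ` S"
  shows "card S \<le> card {x\<in>S. c x = 2} + card {x\<in>S. c x = 3} + (k - 3)"
proof -
  define S4 where "S4 = {x\<in>S. 4 \<le> c x}"
  have "c x = 2 \<or> c x = 3 \<or> 4 \<le> c x" if "x \<in> S" for x
  proof -
    have "c x \<in> {1..k}" using that assms(3) col unfolding packing_colouring_iff by auto
    moreover have "c x \<noteq> 1" using that assms(4) by (metis image_eqI)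
    ultimately show ?thesis by auto
  qed
  then have cover: "{x\<in>S. c x = 2} \<union> {x\<in>S. c x = 3} \<union> S4 = S"
    unfolding S4_def by blast
  have "card ({x\<in>S. c x = 2} \<union> {x\<in>S. c x = 3} \<union> S4)
      \<le> card ({x\<in>S. c x = 2} \<union> {x\<in>S. c x = 3}) + card S4"
    by (rule card_Un_le)
  also have "\<dots> \<le> card {x\<in>S. c x = 2} + card {x\<in>S. c x = 3} + card S4"
    using card_Un_le by simp
  finally have "card S \<le> card {x\<in>S. c x = 2} + card {x\<in>S. c x = 3} + card S4"
    by (simp only: cover)
  moreover have "card S4 \<le> card {4..k}"
  proof (rule card_inj_on_le)
    show "inj_on c S4"
    proof (rule inj_onI)
      fix x y assume "x \<in> S4" "y \<in> S4" "c x = c y"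
      then have "x \<in> V" "y \<in> V" "4 \<le> c x" using assms(3) unfolding S4_def by auto
      then have "reach_within V E (c x) x y"
        using diam reach_within_mono[of V E 4 x y "c x"] by simp
      then show "x = y" using col \<open>x \<in> V\<close> \<open>y \<in> V\<close> \<open>c x = c y\<close>
        unfolding packing_colouring_iff by blast
    qed
    show "c ` S4 \<subseteq> {4..k}" using col assms(3) unfolding packing_colouring_iff S4_def by force
  qed simp
  ultimately show ?thesis by simp
qed

lemma fssd_adj_sym: "fssd_adj V E m x y \<Longrightarrow> fssd_adj V E m y x"
  by (auto simp: fssd_adj_def split: sum.splits prod.splits)

lemma fssd_reach_sym:
  "reach_within (fssd_verts V E m) (fssd_adj V E m) k x y \<Longrightarrow>
   reach_within (fssd_verts V E m) (fssd_adj V E m) k y x"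
  by (rule reach_within_sym[OF fssd_adj_sym])

lemma fssd_reach_1_Inr_Inr:
  "reach_within (fssd_verts V E m) (fssd_adj V E m) 1 (Inr p) (Inr q) \<Longrightarrow> p = q"
  unfolding reach_within_1_iff fssd_adj_def by auto

abbreviation fssd_K_verts :: "nat \<Rightarrow> nat \<Rightarrow> (nat + nat set \<times> nat) set" where
  "fssd_K_verts n m \<equiv> fssd_verts (K_verts n) (K_adj n) m"

abbreviation fssd_K_adj :: "nat \<Rightarrow> nat \<Rightarrow> (nat + nat set \<times> nat) \<Rightarrow> (nat + nat set \<times> nat) \<Rightarrow> bool" where
  "fssd_K_adj n m \<equiv> fssd_adj (K_verts n) (K_adj n) m"

abbreviation fssd_K_reach ::
  "nat \<Rightarrow> nat \<Rightarrow> nat \<Rightarrow> (nat + nat set \<times> nat) \<Rightarrow> (nat + nat set \<times> nat) \<Rightarrow> bool" where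
  "fssd_K_reach n m k \<equiv> reach_within (fssd_K_verts n m) (fssd_K_adj n m) k"

lemma Inl_in_fssd_K_verts [simp]: "Inl a \<in> fssd_K_verts n m \<longleftrightarrow> a < n"
  by (auto simp: fssd_verts_def K_verts_def)

lemma Inr_in_fssd_K_verts:
  "a < n \<Longrightarrow> b < n \<Longrightarrow> a \<noteq> b \<Longrightarrow> t < m \<Longrightarrow> Inr ({a, b}, t) \<in> fssd_K_verts n m"
  unfolding fssd_verts_def K_verts_def K_adj_def by blast

lemma fssd_K_vertsE:
  assumes "x \<in> fssd_K_verts n m"
  obtains (Inl) a where "a < n" "x = Inl a"
    | (Inr) a b t where "a < n" "b < n" "a \<noteq> b" "t < m" "x = Inr ({a, b}, t)"
  using assms unfolding fssd_verts_def K_verts_def K_adj_def by blast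

lemma fssd_K_reach_Inl_Inr:
  assumes "a < n" "b < n" "a \<noteq> b" "t < m"
  shows "fssd_K_reach n m 1 (Inl a) (Inr ({a, b}, t))"
  using assms Inr_in_fssd_K_verts[OF assms] unfolding reach_within_1_iff fssd_adj_def by auto

lemma fssd_K_reach_Inl_Inl:
  assumes "a < n" "b < n" "0 < m"
  shows "fssd_K_reach n m 2 (Inl a) (Inl b)"
proof (cases "a = b")
  case True
  then show ?thesis using assms by (simp add: reach_within_refl)
next
  case False
  have "fssd_K_reach n m 1 (Inl a) (Inr ({a, b}, 0))"
    using assms False by (intro fssd_K_reach_Inl_Inr) auto
  moreover have "fssd_K_reach n m 1 (Inr ({a, b}, 0)) (Inl b)"
    using fssd_reach_sym[OF fssd_K_reach_Inl_Inr[of b n a 0 m]] assms False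
    by (simp add: insert_commute)
  ultimately show ?thesis by (rule reach_within_trans) simp
qed

lemma fssd_K_reach_Inr_Inr:
  assumes "p < n" "a < n" "b < n" "p \<noteq> a" "p \<noteq> b" "s < m" "t < m"
  shows "fssd_K_reach n m 2 (Inr ({p, a}, s)) (Inr ({p, b}, t))"
proof -
  have "fssd_K_reach n m 1 (Inr ({p, a}, s)) (Inl p)"
    using assms by (intro fssd_reach_sym[OF fssd_K_reach_Inl_Inr]) auto
  moreover have "fssd_K_reach n m 1 (Inl p) (Inr ({p, b}, t))"
    using assms by (intro fssd_K_reach_Inl_Inr) auto
  ultimately show ?thesis by (rule reach_within_trans) simp
qed

lemma fssd_K_reach_Inl_Inr_3:
  assumes "w < n" "a < n" "b < n" "a \<noteq> b" "t < m"
  shows "fssd_K_reach n m 3 (Inl w) (Inr ({a, b}, t))"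
proof -
  have "fssd_K_reach n m 2 (Inl w) (Inl a)" using assms by (intro fssd_K_reach_Inl_Inl) auto
  moreover have "fssd_K_reach n m 1 (Inl a) (Inr ({a, b}, t))"
    using assms by (intro fssd_K_reach_Inl_Inr)
  ultimately show ?thesis by (rule reach_within_trans) simp
qed

lemma fssd_K_reach_from_Inl:
  assumes "a < n" "0 < m" "y \<in> fssd_K_verts n m"
  shows "fssd_K_reach n m 3 (Inl a) y"
  using assms(3)
proof (cases rule: fssd_K_vertsE)
  case (Inl b)
  then have "fssd_K_reach n m 2 (Inl a) y" using assms by (simp add: fssd_K_reach_Inl_Inl)
  then show ?thesis by (rule reach_within_mono) simp
next
  case (Inr b b' t)
  then show ?thesis using assms by (simp add: fssd_K_reach_Inl_Inr_3)
qed

lemma fssd_K_diameter: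
  assumes "0 < m" "x \<in> fssd_K_verts n m" "y \<in> fssd_K_verts n m"
  shows "fssd_K_reach n m 4 x y"
  using assms(2)
proof (cases rule: fssd_K_vertsE)
  case (Inl a)
  then have "fssd_K_reach n m 3 x y" using assms by (simp add: fssd_K_reach_from_Inl)
  then show ?thesis by (rule reach_within_mono) simp
next
  case (Inr a b t)
  have "fssd_K_reach n m 1 x (Inl a)"
    using Inr fssd_reach_sym[OF fssd_K_reach_Inl_Inr] by simp
  moreover have "fssd_K_reach n m 3 (Inl a) y" using Inr assms by (simp add: fssd_K_reach_from_Inl)
  ultimately show ?thesis by (rule reach_within_trans) simp
qed

lemma packing_colouring_fssd_K:
  "packing_colouring (fssd_K_verts n m) (fssd_K_adj n m) (n + 1) (case_sum (\<lambda>a. a + 2) (\<lambda>_. 1))"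
  unfolding packing_colouring_iff
proof (intro conjI ballI impI)
  fix x assume "x \<in> fssd_K_verts n m"
  then show "case_sum (\<lambda>a. a + 2) (\<lambda>_. 1) x \<in> {1..n + 1}"
    by (cases rule: fssd_K_vertsE) auto
next
  fix x y
  assume "case_sum (\<lambda>a. a + 2) (\<lambda>_. 1) x = case_sum (\<lambda>a. a + 2) (\<lambda>_. 1) y \<and>
    fssd_K_reach n m (case_sum (\<lambda>a. a + 2) (\<lambda>_. 1) x) x y"
  then show "x = y"
    by (cases x; cases y) (auto dest: fssd_reach_1_Inr_Inr[simplified])
qed

definition subdiv_star :: "nat \<Rightarrow> nat set \<Rightarrow> (nat + nat set \<times> nat) set" where
  "subdiv_star u X = (\<lambda>x. Inr ({u, x}, 0)) ` X"

lemma card_subdiv_star: "card (subdiv_star u X) = card X"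
  unfolding subdiv_star_def by (rule card_image) (auto simp: inj_on_def doubleton_eq_iff)

lemma image_subdiv_star_iff: "j \<in> f ` subdiv_star u X \<longleftrightarrow> (\<exists>x\<in>X. f (Inr ({u, x}, 0)) = j)"
  by (auto simp: subdiv_star_def)

lemma subdiv_star_subset:
  "u < n \<Longrightarrow> X \<subseteq> {..<n} - {u} \<Longrightarrow> 0 < m \<Longrightarrow> subdiv_star u X \<subseteq> fssd_K_verts n m"
  unfolding subdiv_star_def using Inr_in_fssd_K_verts by blast

lemma pairwise_reach_subdiv_star:
  assumes "u < n" "X \<subseteq> {..<n} - {u}" "0 < m"
  shows "pairwise (fssd_K_reach n m 2) (subdiv_star u X)"
  unfolding subdiv_star_def
  by (rule pairwise_imageI) (use assms in \<open>auto intro: fssd_K_reach_Inr_Inr\<close>)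

lemma pairwise_reach_triangle:
  assumes "a < n" "b < n" "d < n" "a \<noteq> b" "a \<noteq> d" "b \<noteq> d" "0 < m"
  shows "pairwise (fssd_K_reach n m 2) {Inr ({a, b}, 0), Inr ({a, d}, 0), Inr ({b, d}, 0)}"
proof -
  have "fssd_K_reach n m 2 (Inr ({p, q}, 0)) (Inr ({p, r}, 0))"
    if "p \<in> {a, b, d}" "q \<in> {a, b, d}" "r \<in> {a, b, d}" "p \<noteq> q" "p \<noteq> r" for p q r
    using that assms by (intro fssd_K_reach_Inr_Inr) auto
  from this[of a b d] this[of a d b] this[of b a d] this[of b d a] this[of d a b] this[of d b a]
  show ?thesis
    unfolding pairwise_insert using assms by (auto simp: insert_commute)
qed

lemma pairwise_reach_Inl:
  "X \<subseteq> {..<n} \<Longrightarrow> 0 < m \<Longrightarrow> pairwise (fssd_K_reach n m 2) (Inl ` X)"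
  by (rule pairwise_imageI) (auto intro: fssd_K_reach_Inl_Inl)

locale fssd_K_packing_colouring =
  fixes n m k :: nat and c :: "nat + nat set \<times> nat \<Rightarrow> nat"
  assumes n_ge_3: "3 \<le> n" and m_pos: "0 < m"
    and colouring: "packing_colouring (fssd_K_verts n m) (fssd_K_adj n m) k c"
begin

lemma card_le_colours_2_3:
  "S \<subseteq> fssd_K_verts n m \<Longrightarrow> 1 \<notin> c ` S \<Longrightarrow>
   card S \<le> card {x\<in>S. c x = 2} + card {x\<in>S. c x = 3} + (k - 3)"
  using colouring fssd_K_diameter[OF m_pos] by (blast intro: card_le_colours_2_3_if_diameter_le_4)

lemma card_le_if_pairwise_reach_2:
  assumes "S \<subseteq> fssd_K_verts n m" "1 \<notin> c ` S" "pairwise (fssd_K_reach n m 2) S"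
  shows "card S \<le> 2 + (k - 3)"
  using card_le_colours_2_3[OF assms(1,2)]
    card_colour_class_le_1[OF colouring assms(1,3), of 2] card_colour_class_le_1[OF colouring assms(1,3), of 3]
  by linarith

lemma card_Un_le_if_pairwise_reach_2:
  assumes "A \<subseteq> fssd_K_verts n m" "B \<subseteq> fssd_K_verts n m" "1 \<notin> c ` (A \<union> B)"
    "pairwise (fssd_K_reach n m 2) A" "pairwise (fssd_K_reach n m 2) B"
  shows "card (A \<union> B) \<le> 4 + (k - 3)"
  using card_le_colours_2_3[of "A \<union> B"] assms
    card_colour_class_Un_le_2[OF colouring assms(1,2,4,5), of 2]
    card_colour_class_Un_le_2[OF colouring assms(1,2,4,5), of 3]
  by simp

lemma subdiv_colour_ne_1:
  assumes "c (Inl a) = 1" "a < n" "b < n" "a \<noteq> b"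
  shows "c (Inr ({a, b}, 0)) \<noteq> 1"
  using colouring fssd_K_reach_Inl_Inr[OF assms(2-4) m_pos] Inr_in_fssd_K_verts[OF assms(2-4) m_pos]
    assms unfolding packing_colouring_iff by fastforce

lemma subdiv_star_colour_ne_1:
  assumes "c (Inl u) = 1" "u < n" "X \<subseteq> {..<n} - {u}"
  shows "1 \<notin> c ` subdiv_star u X"
  unfolding image_subdiv_star_iff using subdiv_colour_ne_1[OF assms(1,2)] assms(3) by blast

lemma lower_bound_if_no_original_coloured_1:
  assumes "\<forall>a<n. c (Inl a) \<noteq> 1"
  shows "n + 1 \<le> k"
proof -
  let ?S = "Inl ` {..<n} :: (nat + nat set \<times> nat) set"
  have "card ?S \<le> 2 + (k - 3)"
    using assms pairwise_reach_Inl[OF _ m_pos] by (intro card_le_if_pairwise_reach_2) auto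
  moreover have "card ?S = n" by (simp add: card_image)
  ultimately show ?thesis using n_ge_3 by linarith
qed

lemma lower_bound_if_two_originals_not_coloured_1:
  assumes u: "u < n" "c (Inl u) = 1" and two: "2 \<le> card {a. a < n \<and> c (Inl a) \<noteq> 1}"
  shows "n + 1 \<le> k"
proof -
  define N where "N = {a. a < n \<and> c (Inl a) \<noteq> 1}"
  define A where "A = subdiv_star u ({..<n} - {u})"
  define B where "B = (Inl ` N :: (nat + nat set \<times> nat) set)"
  have A: "A \<subseteq> fssd_K_verts n m" "pairwise (fssd_K_reach n m 2) A" "1 \<notin> c ` A"
    unfolding A_def
    using subdiv_star_subset[OF u(1) _ m_pos] pairwise_reach_subdiv_star[OF u(1) _ m_pos]
      subdiv_star_colour_ne_1[OF u(2,1)]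
    by auto
  have B: "B \<subseteq> fssd_K_verts n m" "pairwise (fssd_K_reach n m 2) B" "1 \<notin> c ` B"
    unfolding B_def N_def using m_pos by (auto intro: pairwise_reach_Inl)
  have "pairwise (fssd_K_reach n m 3) (A \<union> B)"
  proof (rule pairwiseI)
    fix x y assume xy: "x \<in> A \<union> B" "y \<in> A \<union> B" "x \<noteq> y"
    show "fssd_K_reach n m 3 x y"
    proof (cases "x \<in> B \<or> y \<in> B")
      case True
      with xy A(1) B(1) show ?thesis
        unfolding B_def N_def using m_pos by (auto intro: fssd_K_reach_from_Inl fssd_reach_sym)
    next
      case False
      with xy have "fssd_K_reach n m 2 x y" using pairwiseD(1)[OF A(2)] by auto
      then show ?thesis by (rule reach_within_mono) simp
    qed
  qed
  then have "card {x\<in>A \<union> B. c x = 3} \<le> 1"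
    using A(1) B(1) by (intro card_colour_class_le_1[OF colouring]) auto
  moreover have "card {x\<in>A \<union> B. c x = 2} \<le> 2"
    using A B by (intro card_colour_class_Un_le_2[OF colouring]) auto
  moreover have "card (A \<union> B) \<le> card {x\<in>A \<union> B. c x = 2} + card {x\<in>A \<union> B. c x = 3} + (k - 3)"
    using A B by (intro card_le_colours_2_3) auto
  moreover have "card (A \<union> B) = (n - 1) + card N"
  proof -
    have "card A = n - 1" unfolding A_def card_subdiv_star using u by simp
    moreover have "card B = card N" unfolding B_def by (simp add: card_image)
    moreover have "A \<inter> B = {}" unfolding A_def B_def subdiv_star_def by auto
    moreover have "finite A" "finite B" unfolding A_def B_def N_def subdiv_star_def by auto
    ultimately show ?thesis by (simp add: card_Un_disjoint)
  qed
  ultimately show ?thesis using two n_ge_3 unfolding N_def by linarith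
qed

lemma subdiv_colour_ne_1_if_one_original_not_coloured_1:
  assumes one: "card {a. a < n \<and> c (Inl a) \<noteq> 1} \<le> 1" and "a < n" "b < n" "a \<noteq> b"
  shows "c (Inr ({a, b}, 0)) \<noteq> 1"
proof -
  have "c (Inl a) = 1 \<or> c (Inl b) = 1"
  proof (rule ccontr)
    assume "\<not> (c (Inl a) = 1 \<or> c (Inl b) = 1)"
    then have "{a, b} \<subseteq> {a. a < n \<and> c (Inl a) \<noteq> 1}" using assms by auto
    then have "card {a, b} \<le> card {a. a < n \<and> c (Inl a) \<noteq> 1}" by (intro card_mono) auto
    then show False using assms by simp
  qed
  then show ?thesis
  proof
    assume "c (Inl b) = 1"
    then have "c (Inr ({b, a}, 0)) \<noteq> 1" using subdiv_colour_ne_1 assms by simp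
    then show ?thesis by (simp add: insert_commute)
  qed (use subdiv_colour_ne_1 assms in simp)
qed

lemma lower_bound_if_no_subdiv_coloured_1:
  assumes subdiv: "\<And>a b. a < n \<Longrightarrow> b < n \<Longrightarrow> a \<noteq> b \<Longrightarrow> c (Inr ({a, b}, 0)) \<noteq> 1"
  shows "n + 1 \<le> k"
proof -
  have star: "subdiv_star u X \<subseteq> fssd_K_verts n m" "pairwise (fssd_K_reach n m 2) (subdiv_star u X)"
    "1 \<notin> c ` subdiv_star u X" if "u < n" "X \<subseteq> {..<n} - {u}" for u X
  proof -
    show "subdiv_star u X \<subseteq> fssd_K_verts n m" using that m_pos by (rule subdiv_star_subset)
    show "pairwise (fssd_K_reach n m 2) (subdiv_star u X)"
      using that m_pos by (rule pairwise_reach_subdiv_star)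
    show "1 \<notin> c ` subdiv_star u X"
      unfolding image_subdiv_star_iff using that subdiv[of u] by blast
  qed
  have triangle: "T \<subseteq> fssd_K_verts n m" "pairwise (fssd_K_reach n m 2) T" "1 \<notin> c ` T"
    if "T = {Inr ({a, b}, 0), Inr ({a, d}, 0), Inr ({b, d}, 0)}"
      "a < n" "b < n" "d < n" "a \<noteq> b" "a \<noteq> d" "b \<noteq> d" for T a b d
    using that pairwise_reach_triangle[OF that(2-) m_pos] subdiv[of a b] subdiv[of a d] subdiv[of b d]
      Inr_in_fssd_K_verts[OF _ _ _ m_pos]
    by auto
  consider "n = 3" | "n = 4" | "5 \<le> n" using n_ge_3 by linarith
  then show ?thesis
  proof cases
    case 1
    let ?T = "{Inr ({0, 1}, 0), Inr ({0, 2}, 0), Inr ({1, 2}, 0)} :: (nat + nat set \<times> nat) set"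
    have "card ?T \<le> 2 + (k - 3)"
      using triangle[of ?T 0 1 2] 1 by (intro card_le_if_pairwise_reach_2) auto
    moreover have "card ?T = 3" by (simp add: doubleton_eq_iff)
    ultimately show ?thesis using 1 by linarith
  next
    case 2
    let ?A = "subdiv_star 0 {1, 2, 3}"
    let ?T = "{Inr ({1, 2}, 0), Inr ({1, 3}, 0), Inr ({2, 3}, 0)} :: (nat + nat set \<times> nat) set"
    have "card (?A \<union> ?T) \<le> 4 + (k - 3)"
      using star[of 0 "{1, 2, 3}"] triangle[of ?T 1 2 3] 2
      by (intro card_Un_le_if_pairwise_reach_2) auto
    moreover have "card (?A \<union> ?T) = 6" by (simp add: subdiv_star_def doubleton_eq_iff)
    ultimately show ?thesis using 2 by linarith
  next
    case 3
    let ?A = "subdiv_star 0 ({..<n} - {0})" and ?B = "subdiv_star 1 ({..<n} - {0, 1})"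
    have "card (?A \<union> ?B) \<le> 4 + (k - 3)"
      using star[of 0 "{..<n} - {0}"] star[of 1 "{..<n} - {0, 1}"] 3
      by (intro card_Un_le_if_pairwise_reach_2) auto
    moreover have "card (?A \<union> ?B) = (n - 1) + (n - 2)"
    proof -
      have "?A \<inter> ?B = {}" by (auto simp: subdiv_star_def doubleton_eq_iff)
      moreover have "card ?A = n - 1" "card ?B = n - 2" using 3 by (simp_all add: card_subdiv_star)
      ultimately show ?thesis by (simp add: card_Un_disjoint subdiv_star_def)
    qed
    ultimately show ?thesis using 3 by linarith
  qed
qed

lemma lower_bound: "n + 1 \<le> k"
proof (cases "card {a. a < n \<and> c (Inl a) \<noteq> 1} \<le> 1")
  case True
  then show ?thesis
    by (intro lower_bound_if_no_subdiv_coloured_1 subdiv_colour_ne_1_if_one_original_not_coloured_1)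
next
  case False
  then have two: "2 \<le> card {a. a < n \<and> c (Inl a) \<noteq> 1}" by simp
  show ?thesis
  proof (cases "\<exists>u<n. c (Inl u) = 1")
    case True
    then obtain u where "u < n" "c (Inl u) = 1" by blast
    then show ?thesis using two by (rule lower_bound_if_two_originals_not_coloured_1)
  next
    case False
    then show ?thesis by (intro lower_bound_if_no_original_coloured_1) auto
  qed
qed

end

theorem corollary1:
  fixes n m :: nat
  assumes "n \<ge> 3" and "m \<ge> 1"
  shows "packing_chromatic (fssd_verts (K_verts n) (K_adj n) m)
                           (fssd_adj (K_verts n) (K_adj n) m) = n + 1"
proof (rule packing_chromatic_eqI)
  show "packing_colouring (fssd_K_verts n m) (fssd_K_adj n m) (n + 1) (case_sum (\<lambda>a. a + 2) (\<lambda>_. 1))"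
    by (rule packing_colouring_fssd_K)
next
  fix k c assume "packing_colouring (fssd_K_verts n m) (fssd_K_adj n m) k c"
  then interpret fssd_K_packing_colouring n m k c
    using assms by unfold_locales auto
  show "n + 1 \<le> k" by (rule lower_bound)
qed

end
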